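(* Let $X,Y$ be compact topological spaces, $\mu\in\mathcal{P}(X)$, $\nu\in\mathcal{P}(Y)$, $c\in C(X\times Y)$. For every $u_0\in C(X)$, the sequence $u_m:=S^m(u_0)$ converges uniformly on $X$ to a fixed point $u_\infty$ of $S$.
   Context: For $u\in C(X)$ set $v[u](y)=\log\int_Xe^{-c(x,y)-u(x)}d\mu(x)$, and for $v\in C(Y)$ set $u[v](x)=\log\int_Ye^{-c(x,y)-v(y)}d\nu(y)$. $S:C(X)\to C(X)$ is $S(u)=u[v[u]]$ (an infinite-dimensional form of the Sinkhorn / iterative proportional fitting iteration). *)

theory Defs
  imports "HOL-Probability.Probability"
begin

text \<open>The Schroedinger/Sinkhorn potentials.  X and Y are modelled as the (compact)
  topological spaces underlying the types 'a and 'b; C(X) is the set of continuous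
  real functions on UNIV.\<close>

definition v_of :: "('a \<times> 'b \<Rightarrow> real) \<Rightarrow> 'a measure \<Rightarrow> ('a \<Rightarrow> real) \<Rightarrow> 'b \<Rightarrow> real" where
  "v_of c \<mu> u = (\<lambda>y. ln (\<integral>x. exp (- c (x, y) - u x) \<partial>\<mu>))"

definition u_of :: "('a \<times> 'b \<Rightarrow> real) \<Rightarrow> 'b measure \<Rightarrow> ('b \<Rightarrow> real) \<Rightarrow> 'a \<Rightarrow> real" where
  "u_of c \<nu> v = (\<lambda>x. ln (\<integral>y. exp (- c (x, y) - v y) \<partial>\<nu>))"

definition sinkhorn_S :: "('a \<times> 'b \<Rightarrow> real) \<Rightarrow> 'a measure \<Rightarrow> 'b measure \<Rightarrow> ('a \<Rightarrow> real) \<Rightarrow> 'a \<Rightarrow> real" where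
  "sinkhorn_S c \<mu> \<nu> u = u_of c \<nu> (v_of c \<mu> u)"

end

theory Submission
  imports Defs
begin

(* The half step u \<mapsto> v[u] contracts the oscillation seminorm: if u - u' takes values in an
   interval of length r, then v[u] - v[u'] takes values in one of length (1 - exp (-4 C)) r,
   where C bounds |c|.  Hence the increments S(u_m) - u_m have geometrically decaying
   oscillation.  By Fubini, the integral of exp (S u - u) against \<mu> is 1, so the increment
   changes sign and is bounded in sup norm by its oscillation.  The increments are therefore
   summable, u_m converges uniformly, and the limit is a fixed point because S is
   nonexpansive in the sup norm. *)

lemma ln_convex_mix_gap_le:
  fixes a k t r :: real
  assumes "a > 0" "0 < k" "k \<le> 1" "a \<le> t" "t \<le> a * exp r"
  shows "ln t - ln (k * t + (1 - k) * a) \<le> (1 - k) * r"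
proof -
  define s where "s = ln (t / a)"
  have ratio: "1 \<le> t / a" "t / a \<le> exp r"
    using assms by (simp_all add: field_simps)
  have ts: "t / a = exp s" and s_nonneg: "0 \<le> s"
    using ratio by (simp_all add: s_def)
  have s_le: "s \<le> r"
    using ln_mono[OF ratio(2)] ratio(1) by (simp add: s_def)
  have mix_pos: "0 < k * (t / a) + (1 - k)"
    using ratio assms by (auto intro: add_pos_nonneg)
  have "exp (k * s) \<le> k * exp s + (1 - k)"
    using convex_onD[OF exp_convex, of k 0 s] assms by simp
  then have ks: "k * s \<le> ln (k * (t / a) + (1 - k))"
    using ts mix_pos by (subst ln_ge_iff) auto
  have "k * t + (1 - k) * a = a * (k * (t / a) + (1 - k))"
    using assms by (simp add: field_simps)
  then have "ln (k * t + (1 - k) * a) = ln (a * (k * (t / a) + (1 - k)))"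
    by (rule arg_cong)
  also have "\<dots> = ln a + ln (k * (t / a) + (1 - k))"
    using assms(1) mix_pos by (rule ln_mult_pos)
  finally have "ln t - ln (k * t + (1 - k) * a) = s - ln (k * (t / a) + (1 - k))"
    using assms by (simp add: s_def ln_div)
  also have "\<dots> \<le> (1 - k) * s" using ks by (simp add: algebra_simps)
  also have "\<dots> \<le> (1 - k) * r" using s_le assms by (simp add: mult_left_mono)
  finally show ?thesis .
qed

lemma mean_ratio_excess_mono:
  fixes A1 Z1 A2 Z2 a k :: real
  assumes "0 < Z1" "0 < Z2" "0 \<le> k" "a * Z1 \<le> A1"
    and "k * (A1 - a * Z1) \<le> A2 - a * Z2" "k * Z2 \<le> Z1"
  shows "k\<^sup>2 * (A1 / Z1) + (1 - k\<^sup>2) * a \<le> A2 / Z2"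
proof -
  have "k\<^sup>2 * (A1 - a * Z1) / Z1 \<le> k * (A1 - a * Z1) / Z2"
  proof -
    have "k * Z2 * (k * (A1 - a * Z1)) \<le> Z1 * (k * (A1 - a * Z1))"
      using assms by (intro mult_right_mono) auto
    then show ?thesis
      using assms(1,2) by (simp add: divide_simps power2_eq_square algebra_simps)
  qed
  also have "\<dots> \<le> (A2 - a * Z2) / Z2"
    using assms(2,5) by (simp add: divide_right_mono)
  finally show ?thesis
    using assms(1,2) by (simp add: divide_simps algebra_simps)
qed

definition log_mean_exp :: "'a measure \<Rightarrow> ('a \<Rightarrow> real) \<Rightarrow> real" where
  "log_mean_exp M f = ln (\<integral>x. exp (f x) \<partial>M)"

lemma integral_mult_bounds:
  fixes p g :: "'a \<Rightarrow> real"
  assumes "integrable M p" "integrable M (\<lambda>x. p x * g x)"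
    and "\<And>x. 0 \<le> p x" "\<And>x. a \<le> g x" "\<And>x. g x \<le> b"
  shows "a * (\<integral>x. p x \<partial>M) \<le> (\<integral>x. p x * g x \<partial>M)"
    and "(\<integral>x. p x * g x \<partial>M) \<le> b * (\<integral>x. p x \<partial>M)"
proof -
  have "(\<integral>x. p x * a \<partial>M) \<le> (\<integral>x. p x * g x \<partial>M)"
    using assms by (intro integral_mono) (auto simp: mult_left_mono)
  then show "a * (\<integral>x. p x \<partial>M) \<le> (\<integral>x. p x * g x \<partial>M)" by (simp add: mult.commute)
  have "(\<integral>x. p x * g x \<partial>M) \<le> (\<integral>x. p x * b \<partial>M)"
    using assms by (intro integral_mono) (auto simp: mult_left_mono)
  then show "(\<integral>x. p x * g x \<partial>M) \<le> b * (\<integral>x. p x \<partial>M)" by (simp add: mult.commute)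
qed

lemma integral_excess_mono:
  fixes p1 p2 g :: "'a \<Rightarrow> real"
  assumes "integrable M p1" "integrable M (\<lambda>x. p1 x * g x)"
    and "integrable M p2" "integrable M (\<lambda>x. p2 x * g x)"
    and "\<And>x. k * p1 x \<le> p2 x" "\<And>x. a \<le> g x"
  shows "k * ((\<integral>x. p1 x * g x \<partial>M) - a * (\<integral>x. p1 x \<partial>M))
           \<le> (\<integral>x. p2 x * g x \<partial>M) - a * (\<integral>x. p2 x \<partial>M)"
proof -
  have "(\<integral>x. k * (p1 x * g x) - k * a * p1 x \<partial>M) \<le> (\<integral>x. p2 x * g x - a * p2 x \<partial>M)"
  proof (rule integral_mono)
    fix x
    have "k * p1 x * (g x - a) \<le> p2 x * (g x - a)"
      using assms(5,6) by (intro mult_right_mono) auto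
    then show "k * (p1 x * g x) - k * a * p1 x \<le> p2 x * g x - a * p2 x"
      by (simp add: algebra_simps)
  qed (use assms(1-4) in auto)
  then show ?thesis
    using assms(1-4) by (simp add: algebra_simps)
qed

lemma ln_tilted_mean_diff_le:
  fixes p1 p2 g :: "'a \<Rightarrow> real"
  assumes int1: "integrable M p1" "integrable M (\<lambda>x. p1 x * g x)"
    and int2: "integrable M p2" "integrable M (\<lambda>x. p2 x * g x)"
    and Z_pos: "0 < (\<integral>x. p1 x \<partial>M)" "0 < (\<integral>x. p2 x \<partial>M)"
    and "\<And>x. 0 \<le> p1 x" "0 < k" "k \<le> 1" "\<And>x. k * p1 x \<le> p2 x" "\<And>x. k * p2 x \<le> p1 x"
    and "0 < a" "\<And>x. a \<le> g x" "\<And>x. g x \<le> a * exp r"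
  shows "ln ((\<integral>x. p1 x * g x \<partial>M) / (\<integral>x. p1 x \<partial>M))
           - ln ((\<integral>x. p2 x * g x \<partial>M) / (\<integral>x. p2 x \<partial>M)) \<le> (1 - k\<^sup>2) * r"
proof -
  define Z1 A1 Z2 A2
    where "Z1 = (\<integral>x. p1 x \<partial>M)" "A1 = (\<integral>x. p1 x * g x \<partial>M)"
      and "Z2 = (\<integral>x. p2 x \<partial>M)" "A2 = (\<integral>x. p2 x * g x \<partial>M)"
  have mean1: "a \<le> A1 / Z1" "A1 / Z1 \<le> a * exp r"
    using integral_mult_bounds[OF int1 assms(7,13,14)] Z_pos
    by (simp_all add: Z1_A1_def pos_le_divide_eq pos_divide_le_eq)
  have "(\<integral>x. k * p2 x \<partial>M) \<le> Z1"
    unfolding Z1_A1_def using int1 int2 assms(11) by (intro integral_mono) auto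
  then have "k * Z2 \<le> Z1"
    by (simp add: Z2_A2_def)
  then have mix_le: "k\<^sup>2 * (A1 / Z1) + (1 - k\<^sup>2) * a \<le> A2 / Z2"
    using integral_excess_mono[OF int1 int2 assms(10,13)] mean1 Z_pos assms(8)
    by (intro mean_ratio_excess_mono) (auto simp: Z1_A1_def Z2_A2_def pos_le_divide_eq)
  have mix_pos: "0 < k\<^sup>2 * (A1 / Z1) + (1 - k\<^sup>2) * a"
    using mean1 assms(8,9,12)
    by (intro add_pos_nonneg mult_pos_pos mult_nonneg_nonneg) (auto simp: power_le_one)
  have "ln (A1 / Z1) - ln (k\<^sup>2 * (A1 / Z1) + (1 - k\<^sup>2) * a) \<le> (1 - k\<^sup>2) * r"
    using assms(8,9,12) mean1 by (intro ln_convex_mix_gap_le) (auto simp: power_le_one)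
  moreover have "ln (k\<^sup>2 * (A1 / Z1) + (1 - k\<^sup>2) * a) \<le> ln (A2 / Z2)"
    using mix_le mix_pos by simp
  ultimately show ?thesis
    unfolding Z1_A1_def Z2_A2_def by linarith
qed

context prob_space
begin

lemma integrable_exp_bounded:
  fixes f :: "'a \<Rightarrow> real"
  assumes "f \<in> borel_measurable M" "\<And>x. \<bar>f x\<bar> \<le> B"
  shows "integrable M (\<lambda>x. exp (f x))"
  using assms by (intro integrable_const_bound[where B = "exp B"]) (auto simp: abs_le_iff)

lemma integral_exp_pos:
  fixes f :: "'a \<Rightarrow> real"
  assumes "f \<in> borel_measurable M" "\<And>x. \<bar>f x\<bar> \<le> B"
  shows "0 < (\<integral>x. exp (f x) \<partial>M)"
proof -
  have "- B \<le> f x" for x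
    using assms(2)[of x] by linarith
  then have "(\<integral>x. exp (- B) \<partial>M) \<le> (\<integral>x. exp (f x) \<partial>M)"
    using integrable_exp_bounded[OF assms] by (intro integral_mono) auto
  then have "exp (- B) \<le> (\<integral>x. exp (f x) \<partial>M)"
    by (simp add: prob_space)
  then show ?thesis
    by (rule less_le_trans[OF exp_gt_zero])
qed

lemma log_mean_exp_dist_le:
  fixes f g :: "'a \<Rightarrow> real"
  assumes "f \<in> borel_measurable M" "\<And>x. \<bar>f x\<bar> \<le> Bf"
    and "g \<in> borel_measurable M" "\<And>x. \<bar>g x\<bar> \<le> Bg"
    and "\<And>x. \<bar>f x - g x\<bar> \<le> e"
  shows "\<bar>log_mean_exp M f - log_mean_exp M g\<bar> \<le> e"
proof -
  have one_side: "log_mean_exp M f \<le> log_mean_exp M g + e"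
    if "f \<in> borel_measurable M" "\<And>x. \<bar>f x\<bar> \<le> Bf"
      and "g \<in> borel_measurable M" "\<And>x. \<bar>g x\<bar> \<le> Bg"
      and "\<And>x. f x \<le> g x + e" for f g :: "'a \<Rightarrow> real" and Bf Bg
  proof -
    have "exp (f x) \<le> exp e * exp (g x)" for x
      using that(5)[of x] by (simp flip: exp_add add: add.commute)
    then have "(\<integral>x. exp (f x) \<partial>M) \<le> (\<integral>x. exp e * exp (g x) \<partial>M)"
      using integrable_exp_bounded[OF that(1,2)] integrable_exp_bounded[OF that(3,4)]
      by (intro integral_mono) auto
    then have "log_mean_exp M f \<le> ln (exp e * (\<integral>x. exp (g x) \<partial>M))"
      unfolding log_mean_exp_def using integral_exp_pos[OF that(1,2)] by simp
    also have "\<dots> = e + log_mean_exp M g"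
      unfolding log_mean_exp_def using integral_exp_pos[OF that(3,4)] by (simp add: ln_mult)
    finally show ?thesis by simp
  qed
  show ?thesis
    using one_side[of f Bf g Bg] one_side[of g Bg f Bf] assms
    by (simp add: abs_le_iff algebra_simps)
qed

(* Hilbert-metric contraction: the two differences are ln of averages of exp (- w) under
   densities proportional to exp f1 and exp f2, which agree up to the factor exp D. *)
lemma log_mean_exp_shift_contraction:
  fixes f1 f2 w :: "'a \<Rightarrow> real"
  assumes f1: "f1 \<in> borel_measurable M" "\<And>x. \<bar>f1 x\<bar> \<le> B1"
    and f2: "f2 \<in> borel_measurable M" "\<And>x. \<bar>f2 x\<bar> \<le> B2"
    and w: "w \<in> borel_measurable M" "\<And>x. \<bar>w x\<bar> \<le> Bw"
    and f1_f2: "\<And>x. \<bar>f1 x - f2 x\<bar> \<le> D"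
    and w_range: "\<And>x. \<alpha> \<le> w x \<and> w x \<le> \<alpha> + r"
  shows "(log_mean_exp M (\<lambda>x. f1 x - w x) - log_mean_exp M f1)
           - (log_mean_exp M (\<lambda>x. f2 x - w x) - log_mean_exp M f2)
         \<le> (1 - exp (- 2 * D)) * r"
proof -
  define g where "g x = exp (- w x)" for x
  have exp_shift: "exp (f x - w x) = exp (f x) * g x" for f :: "'a \<Rightarrow> real" and x
    by (simp add: g_def flip: exp_add)
  have D_nonneg: "0 \<le> D"
    using f1_f2[of undefined] by simp
  have "\<bar>f1 x - w x\<bar> \<le> B1 + Bw" "\<bar>f2 x - w x\<bar> \<le> B2 + Bw" for x
    using f1(2)[of x] f2(2)[of x] w(2)[of x] by linarith+
  then have "integrable M (\<lambda>x. exp (f1 x) * g x)" "integrable M (\<lambda>x. exp (f2 x) * g x)"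
    using integrable_exp_bounded[of "\<lambda>x. f1 x - w x" "B1 + Bw"]
      integrable_exp_bounded[of "\<lambda>x. f2 x - w x" "B2 + Bw"] f1(1) f2(1) w(1)
    by (simp_all add: exp_shift)
  moreover have "exp (- D) * exp (f1 x) \<le> exp (f2 x)" "exp (- D) * exp (f2 x) \<le> exp (f1 x)" for x
    using f1_f2[of x] by (auto simp: abs_le_iff simp flip: exp_add)
  moreover have "exp (- \<alpha> - r) \<le> g x" "g x \<le> exp (- \<alpha> - r) * exp r" for x
    using w_range[of x] by (auto simp: g_def simp flip: exp_add)
  ultimately have bound: "ln ((\<integral>x. exp (f1 x) * g x \<partial>M) / (\<integral>x. exp (f1 x) \<partial>M))
      - ln ((\<integral>x. exp (f2 x) * g x \<partial>M) / (\<integral>x. exp (f2 x) \<partial>M)) \<le> (1 - (exp (- D))\<^sup>2) * r"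
    using integrable_exp_bounded[OF f1] integrable_exp_bounded[OF f2]
      integral_exp_pos[OF f1] integral_exp_pos[OF f2] D_nonneg
    by (intro ln_tilted_mean_diff_le[where a = "exp (- \<alpha> - r)" and k = "exp (- D)"]) auto
  have A_pos: "0 < (\<integral>x. exp (f x) * g x \<partial>M)"
    if "f \<in> borel_measurable M" "\<And>x. \<bar>f x\<bar> \<le> B" for f :: "'a \<Rightarrow> real" and B
  proof -
    have "\<bar>f x - w x\<bar> \<le> B + Bw" for x
      using that(2)[of x] w(2)[of x] by linarith
    then show ?thesis
      using integral_exp_pos[of "\<lambda>x. f x - w x" "B + Bw"] that(1) w(1) by (simp add: exp_shift)
  qed
  show ?thesis
    using bound A_pos[OF f1] A_pos[OF f2] integral_exp_pos[OF f1] integral_exp_pos[OF f2]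
    by (simp add: log_mean_exp_def exp_shift ln_div power2_eq_square flip: exp_add)
qed

lemma abs_le_oscillation_if_integral_exp_eq_1:
  fixes f :: "'a \<Rightarrow> real"
  assumes "f \<in> borel_measurable M" "\<And>x. \<bar>f x\<bar> \<le> B"
    and "(\<integral>x. exp (f x) \<partial>M) = 1" and "\<And>x x'. f x - f x' \<le> r"
  shows "\<bar>f x\<bar> \<le> r"
proof -
  note int = integrable_exp_bounded[OF assms(1,2)]
  have "f x - r \<le> f x'" "f x' \<le> f x + r" for x'
    using assms(4)[of x x'] assms(4)[of x' x] by linarith+
  then have "(\<integral>x'. exp (f x - r) \<partial>M) \<le> (\<integral>x'. exp (f x') \<partial>M)"
    using int by (intro integral_mono) auto
  then have upper: "f x - r \<le> 0"
    using assms(3) by (simp add: prob_space)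
  have "(\<integral>x'. exp (f x') \<partial>M) \<le> (\<integral>x'. exp (f x + r) \<partial>M)"
    using int \<open>\<And>x'. f x' \<le> f x + r\<close> by (intro integral_mono) auto
  then have lower: "0 \<le> f x + r"
    using assms(3) by (simp add: prob_space)
  show ?thesis
    using upper lower by linarith
qed

end

lemma bounded_continuous_on_compact_UNIV:
  fixes f :: "'a::topological_space \<Rightarrow> real"
  assumes "compact (UNIV :: 'a set)" "continuous_on UNIV f"
  shows "\<exists>B. \<forall>x. \<bar>f x\<bar> \<le> B"
proof -
  have "bounded (range f)"
    using assms by (intro compact_imp_bounded compact_continuous_image)
  then show ?thesis
    unfolding bounded_real by blast
qed

lemma interval_if_oscillation_le:
  fixes d :: "'a \<Rightarrow> real"
  assumes "\<And>x x'. d x - d x' \<le> r"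
  obtains \<alpha> where "\<And>x. \<alpha> \<le> d x \<and> d x \<le> \<alpha> + r"
proof
  fix x
  have "bdd_below (range d)"
    using assms[of undefined] by (intro bdd_belowI[of _ "d undefined - r"]) (auto simp: algebra_simps)
  moreover have "d x - r \<le> Inf (range d)"
    by (rule cInf_greatest) (use assms[of x] in \<open>auto simp: algebra_simps\<close>)
  ultimately show "Inf (range d) \<le> d x \<and> d x \<le> Inf (range d) + r"
    by (auto intro: cInf_lower)
qed

lemma eventually_nhds_uniformly_close_sections:
  fixes c :: "'a::topological_space \<times> 'b::topological_space \<Rightarrow> real"
  assumes "compact (UNIV :: 'a set)" "continuous_on UNIV c" "0 < e"
  shows "\<forall>\<^sub>F y in nhds y0. \<forall>x. \<bar>c (x, y) - c (x, y0)\<bar> < e"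
proof -
  define W where "W = {p :: 'b \<times> 'a. \<bar>c (snd p, fst p) - c (snd p, y0)\<bar> < e}"
  have "continuous_on UNIV (\<lambda>p :: 'b \<times> 'a. \<bar>c (snd p, fst p) - c (snd p, y0)\<bar>)"
    by (intro continuous_intros continuous_on_compose2[OF assms(2)]) (auto intro!: continuous_intros)
  then have "open W"
    unfolding W_def by (rule open_Collect_less[OF _ continuous_on_const])
  moreover have "{y0} \<times> UNIV \<subseteq> W"
    unfolding W_def using assms(3) by auto
  ultimately have "\<exists>V. y0 \<in> V \<and> open V \<and> V \<times> UNIV \<subseteq> W"
    by (rule Elementary_Topology.tube_lemma[OF assms(1)])
  then obtain V where V: "y0 \<in> V" "open V" "V \<times> UNIV \<subseteq> W"
    by blast
  have "\<forall>x. \<bar>c (x, y) - c (x, y0)\<bar> < e" if "y \<in> V" for y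
    using that V(3) unfolding W_def by (auto simp: subset_iff)
  then show ?thesis
    unfolding eventually_nhds using V(1,2) by blast
qed

lemma open_rectangles_cover_compact:
  fixes K W :: "('a::topological_space \<times> 'b::topological_space) set"
  assumes "compact K" "open W" "K \<subseteq> W"
  obtains G where "finite G" "G \<subseteq> {A \<times> B | A B. open A \<and> open B \<and> A \<times> B \<subseteq> W}" "K \<subseteq> \<Union>G"
proof -
  have cover: "K \<subseteq> \<Union>{A \<times> B | A B. open A \<and> open B \<and> A \<times> B \<subseteq> W}"
  proof
    fix p assume "p \<in> K"
    then obtain A B where "open A" "open B" "p \<in> A \<times> B" "A \<times> B \<subseteq> W"
      using open_prod_elim[OF assms(2)] assms(3) by blast
    then show "p \<in> \<Union>{A \<times> B | A B. open A \<and> open B \<and> A \<times> B \<subseteq> W}" by blast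
  qed
  have "\<And>R. R \<in> {A \<times> B | A B. open A \<and> open B \<and> A \<times> B \<subseteq> W} \<Longrightarrow> open R"
    by (auto intro: open_Times)
  then obtain G where "G \<subseteq> {A \<times> B | A B. open A \<and> open B \<and> A \<times> B \<subseteq> W}" "finite G" "K \<subseteq> \<Union>G"
    by (rule compactE[OF assms(1) cover])
  then show ?thesis
    using that by blast
qed

(* Without second countability, borel on a product may be larger than borel \<Otimes>\<^sub>M borel;
   compactness rescues measurability: each sublevel set {c < t} is a countable union of compact
   sets, and each of these is covered by finitely many open rectangles inside {c < t}. *)
lemma borel_measurable_pair_if_continuous_on_compact:
  fixes c :: "'a::topological_space \<times> 'b::topological_space \<Rightarrow> real"
  assumes "compact (UNIV :: ('a \<times> 'b) set)" "continuous_on UNIV c"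
  shows "c \<in> borel_measurable (borel \<Otimes>\<^sub>M borel)"
proof -
  have "{p. c p < t} \<in> sets (borel \<Otimes>\<^sub>M borel)" for t
  proof -
    define R where "R = {A \<times> B | A B. open A \<and> open B \<and> A \<times> B \<subseteq> {p. c p < t}}"
    have R_sets: "R \<subseteq> sets (borel \<Otimes>\<^sub>M borel)" and R_sub: "\<Union>R \<subseteq> {p. c p < t}"
      unfolding R_def by (auto intro!: pair_measureI borel_open)
    have covers: "\<forall>n. \<exists>G. finite G \<and> G \<subseteq> R \<and> {p. c p \<le> t - 1 / Suc n} \<subseteq> \<Union>G"
    proof
      fix n
      have "compact {p. c p \<le> t - 1 / Suc n}"
        using compact_Int_closed[OF assms(1) closed_Collect_le[OF assms(2) continuous_on_const]]
        by simp
      moreover have "open {p. c p < t}"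
        by (rule open_Collect_less[OF assms(2) continuous_on_const])
      moreover have "c p < t" if "c p \<le> t - 1 / Suc n" for p
        using that divide_pos_pos[of 1 "real (Suc n)"] by linarith
      then have "{p. c p \<le> t - 1 / Suc n} \<subseteq> {p. c p < t}"
        by blast
      ultimately obtain G where "finite G" "G \<subseteq> R" "{p. c p \<le> t - 1 / Suc n} \<subseteq> \<Union>G"
        unfolding R_def by (rule open_rectangles_cover_compact)
      then show "\<exists>G. finite G \<and> G \<subseteq> R \<and> {p. c p \<le> t - 1 / Suc n} \<subseteq> \<Union>G"
        by blast
    qed
    then obtain G
      where G: "\<forall>n. finite (G n) \<and> G n \<subseteq> R \<and> {p. c p \<le> t - 1 / Suc n} \<subseteq> \<Union>(G n)"
      by (rule choice[THEN exE])
    have "{p. c p < t} = (\<Union>n. \<Union>(G n))"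
    proof (intro antisym subsetI)
      fix p assume "p \<in> {p. c p < t}"
      then obtain n where "inverse (real (Suc n)) < t - c p"
        using reals_Archimedean[of "t - c p"] by auto
      then have "c p \<le> t - 1 / Suc n"
        unfolding inverse_eq_divide by linarith
      then show "p \<in> (\<Union>n. \<Union>(G n))"
        using G[rule_format, of n] by blast
    next
      fix p assume "p \<in> (\<Union>n. \<Union>(G n))"
      then obtain n where "p \<in> \<Union>(G n)"
        by blast
      then show "p \<in> {p. c p < t}"
        using G[rule_format, of n] R_sub by blast
    qed
    moreover have "\<Union>(G n) \<in> sets (borel \<Otimes>\<^sub>M borel)" for n
      using G[rule_format, of n] R_sets by (intro sets.finite_Union) auto
    ultimately show ?thesis
      by (simp add: sets.countable_nat_UN)
  qed
  then show ?thesis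
    unfolding borel_measurable_iff_less by (simp add: space_pair_measure)
qed

lemma u_of_eq_v_of_swap: "u_of c \<nu> v = v_of (\<lambda>(y, x). c (x, y)) \<nu> v"
  unfolding u_of_def v_of_def by simp

locale sinkhorn_half_step = prob_space M
  for M :: "'a::topological_space measure" +
  fixes c :: "'a \<times> 'b::topological_space \<Rightarrow> real"
  assumes compact_X: "compact (UNIV :: 'a set)" and compact_Y: "compact (UNIV :: 'b set)"
    and sets_M: "sets M = sets borel" and continuous_c: "continuous_on UNIV c"
begin

lemma cost_bounded: "\<exists>C. 0 \<le> C \<and> (\<forall>p. \<bar>c p\<bar> \<le> C)"
proof -
  have "compact (UNIV :: ('a \<times> 'b) set)"
    using compact_Times[OF compact_X compact_Y] by simp
  then obtain C where "\<forall>p. \<bar>c p\<bar> \<le> C"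
    using bounded_continuous_on_compact_UNIV continuous_c by blast
  then show ?thesis
    using abs_ge_zero order_trans by blast
qed

lemma borel_measurable_continuous:
  "continuous_on UNIV f \<Longrightarrow> f \<in> borel_measurable M"
  unfolding measurable_cong_sets[OF sets_M refl] by (rule borel_measurable_continuous_onI)

lemma continuous_on_integrand:
  "continuous_on UNIV u \<Longrightarrow> continuous_on UNIV (\<lambda>x. - c (x, y) - u x)"
  by (intro continuous_intros continuous_on_compose2[OF continuous_c]) (auto intro!: continuous_intros)

lemma integrand_measurable:
  "continuous_on UNIV u \<Longrightarrow> (\<lambda>x. - c (x, y) - u x) \<in> borel_measurable M"
  by (intro borel_measurable_continuous continuous_on_integrand)

lemma integrand_bounded:
  assumes "continuous_on UNIV u"
  shows "\<exists>B. \<forall>x. \<bar>- c (x, y) - u x\<bar> \<le> B"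
  using bounded_continuous_on_compact_UNIV[OF compact_X continuous_on_integrand[OF assms]] .

lemma v_of_eq_log_mean_exp: "v_of c M u y = log_mean_exp M (\<lambda>x. - c (x, y) - u x)"
  unfolding v_of_def log_mean_exp_def ..

lemma exp_v_of:
  assumes "continuous_on UNIV u"
  shows "exp (v_of c M u y) = (\<integral>x. exp (- c (x, y) - u x) \<partial>M)"
proof -
  obtain B where "\<forall>x. \<bar>- c (x, y) - u x\<bar> \<le> B"
    using integrand_bounded[OF assms] by blast
  then show ?thesis
    using integral_exp_pos[OF integrand_measurable[OF assms], of y B] by (simp add: v_of_def)
qed

lemma v_of_dist_le:
  assumes "continuous_on UNIV u" "continuous_on UNIV u'"
    and "\<And>x. \<bar>u x - u' x\<bar> \<le> e" "\<And>x. \<bar>c (x, y) - c (x, y')\<bar> \<le> e'"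
  shows "\<bar>v_of c M u y - v_of c M u' y'\<bar> \<le> e + e'"
proof -
  obtain B B' where "\<forall>x. \<bar>- c (x, y) - u x\<bar> \<le> B" "\<forall>x. \<bar>- c (x, y') - u' x\<bar> \<le> B'"
    using integrand_bounded[OF assms(1)] integrand_bounded[OF assms(2)] by blast
  moreover have "\<bar>(- c (x, y) - u x) - (- c (x, y') - u' x)\<bar> \<le> e + e'" for x
    using assms(3,4)[of x] by linarith
  ultimately show ?thesis
    unfolding v_of_eq_log_mean_exp using assms(1,2)
    by (intro log_mean_exp_dist_le integrand_measurable) auto
qed

lemma continuous_on_v_of:
  assumes "continuous_on UNIV u"
  shows "continuous_on UNIV (v_of c M u)"
  unfolding continuous_on_def
proof (intro ballI tendsto_mono[OF at_within_le_nhds] tendstoI)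
  fix y0 :: 'b and e :: real
  assume "0 < e"
  then have "\<forall>\<^sub>F y in nhds y0. \<forall>x. \<bar>c (x, y) - c (x, y0)\<bar> < e / 2"
    by (intro eventually_nhds_uniformly_close_sections compact_X continuous_c) simp
  then show "\<forall>\<^sub>F y in nhds y0. dist (v_of c M u y) (v_of c M u y0) < e"
  proof eventually_elim
    case (elim y)
    then have "\<bar>v_of c M u y - v_of c M u y0\<bar> \<le> 0 + e / 2"
      by (intro v_of_dist_le assms) (auto intro: less_imp_le)
    then show ?case
      using \<open>0 < e\<close> by (simp add: dist_real_def)
  qed
qed

lemma v_of_oscillation_contraction:
  assumes "\<And>p. \<bar>c p\<bar> \<le> C"
    and "continuous_on UNIV u" "continuous_on UNIV u'"
    and "\<And>x x'. (u x - u' x) - (u x' - u' x') \<le> r"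
  shows "(v_of c M u y - v_of c M u' y) - (v_of c M u y' - v_of c M u' y') \<le> (1 - exp (- 4 * C)) * r"
proof -
  obtain \<alpha> where \<alpha>: "\<And>x. \<alpha> \<le> u x - u' x \<and> u x - u' x \<le> \<alpha> + r"
    using interval_if_oscillation_le[of "\<lambda>x. u x - u' x"] assms(4) by blast
  have w_cont: "continuous_on UNIV (\<lambda>x. u x - u' x)"
    using assms(2,3) by (intro continuous_intros)
  obtain Bw B1 B2 where Bw: "\<forall>x. \<bar>u x - u' x\<bar> \<le> Bw"
    and B1: "\<forall>x. \<bar>- c (x, y) - u' x\<bar> \<le> B1" and B2: "\<forall>x. \<bar>- c (x, y') - u' x\<bar> \<le> B2"
    using bounded_continuous_on_compact_UNIV[OF compact_X w_cont]
      integrand_bounded[OF assms(3), of y] integrand_bounded[OF assms(3), of y'] by blast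
  have D: "\<bar>(- c (x, y) - u' x) - (- c (x, y') - u' x)\<bar> \<le> 2 * C" for x
    using assms(1)[of "(x, y)"] assms(1)[of "(x, y')"] by linarith
  have "(log_mean_exp M (\<lambda>x. (- c (x, y) - u' x) - (u x - u' x))
        - log_mean_exp M (\<lambda>x. - c (x, y) - u' x))
      - (log_mean_exp M (\<lambda>x. (- c (x, y') - u' x) - (u x - u' x))
        - log_mean_exp M (\<lambda>x. - c (x, y') - u' x))
      \<le> (1 - exp (- 2 * (2 * C))) * r"
    by (rule log_mean_exp_shift_contraction[OF integrand_measurable[OF assms(3)] B1[rule_format]
          integrand_measurable[OF assms(3)] B2[rule_format]
          borel_measurable_continuous[OF w_cont] Bw[rule_format] D \<alpha>])
  then show ?thesis
    by (simp add: v_of_eq_log_mean_exp)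
qed

end

lemma uniform_limit_if_geometric_increments:
  fixes U :: "nat \<Rightarrow> 'a \<Rightarrow> real"
  assumes "0 \<le> q" "q < 1" "\<And>n x. \<bar>U (Suc n) x - U n x\<bar> \<le> q ^ n * R"
  shows "uniform_limit UNIV U (\<lambda>x. U 0 x + (\<Sum>n. U (Suc n) x - U n x)) sequentially"
proof -
  have "summable (\<lambda>n. q ^ n * R)"
    using assms(1,2) by (intro summable_mult2 summable_geometric) simp
  then have "uniform_limit UNIV (\<lambda>n x. \<Sum>i<n. U (Suc i) x - U i x)
      (\<lambda>x. \<Sum>i. U (Suc i) x - U i x) sequentially"
    using assms(3) by (intro Weierstrass_m_test) auto
  then have "uniform_limit UNIV (\<lambda>n x. U 0 x + (\<Sum>i<n. U (Suc i) x - U i x))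
      (\<lambda>x. U 0 x + (\<Sum>i. U (Suc i) x - U i x)) sequentially"
    by (intro uniform_limit_add uniform_limit_const)
  moreover have "(\<lambda>n x. U 0 x + (\<Sum>i<n. U (Suc i) x - U i x)) = U"
  proof (intro ext)
    show "U 0 x + (\<Sum>i<n. U (Suc i) x - U i x) = U n x" for n x
      using sum_lessThan_telescope[of "\<lambda>i. U i x" n] by simp
  qed
  ultimately show ?thesis
    by simp
qed

lemma fixed_point_if_uniform_limit_of_iterates:
  fixes S :: "('a::topological_space \<Rightarrow> real) \<Rightarrow> 'a \<Rightarrow> real"
  assumes nonexpansive: "\<And>u u' e x. continuous_on UNIV u \<Longrightarrow> continuous_on UNIV u' \<Longrightarrow>
      (\<And>x. \<bar>u x - u' x\<bar> \<le> e) \<Longrightarrow> \<bar>S u x - S u' x\<bar> \<le> e"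
    and "\<And>n. continuous_on UNIV (U n)" "continuous_on UNIV L"
    and "\<And>n. U (Suc n) = S (U n)" "uniform_limit UNIV U L sequentially"
  shows "S L = L"
proof
  fix x
  have "(\<lambda>n. U (Suc n) x) \<longlonglongrightarrow> L x"
    by (intro LIMSEQ_Suc tendsto_uniform_limitI[OF assms(5)]) simp
  moreover have "(\<lambda>n. U (Suc n) x) \<longlonglongrightarrow> S L x"
  proof (rule tendstoI)
    fix e :: real assume "0 < e"
    then have "\<forall>\<^sub>F n in sequentially. \<forall>x\<in>UNIV. dist (U n x) (L x) < e / 2"
      using uniform_limitD[OF assms(5), of "e / 2"] by simp
    then show "\<forall>\<^sub>F n in sequentially. dist (U (Suc n) x) (S L x) < e"
    proof eventually_elim
      case (elim n)
      then have "\<bar>S (U n) x - S L x\<bar> \<le> e / 2"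
        using assms(2,3) by (intro nonexpansive) (auto simp: dist_real_def less_imp_le)
      then show ?case
        using \<open>0 < e\<close> by (simp add: assms(4) dist_real_def)
    qed
  qed
  ultimately show "S L x = L x"
    by (metis LIMSEQ_unique)
qed

lemma iterates_converge_to_fixed_point_if_oscillation_contraction:
  fixes S :: "('a::topological_space \<Rightarrow> real) \<Rightarrow> 'a \<Rightarrow> real"
  assumes "compact (UNIV :: 'a set)"
    and continuous: "\<And>u. continuous_on UNIV u \<Longrightarrow> continuous_on UNIV (S u)"
    and nonexpansive: "\<And>u u' e x. continuous_on UNIV u \<Longrightarrow> continuous_on UNIV u' \<Longrightarrow>
      (\<And>x. \<bar>u x - u' x\<bar> \<le> e) \<Longrightarrow> \<bar>S u x - S u' x\<bar> \<le> e"
    and "0 \<le> q" "q < 1"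
    and contraction: "\<And>u u' r x x'. continuous_on UNIV u \<Longrightarrow> continuous_on UNIV u' \<Longrightarrow>
      (\<And>x x'. (u x - u' x) - (u x' - u' x') \<le> r) \<Longrightarrow>
      (S u x - S u' x) - (S u x' - S u' x') \<le> q * r"
    and increment: "\<And>u r x. continuous_on UNIV u \<Longrightarrow>
      (\<And>x x'. (S u x - u x) - (S u x' - u x') \<le> r) \<Longrightarrow> \<bar>S u x - u x\<bar> \<le> r"
    and u0: "continuous_on UNIV u0"
  shows "\<exists>u_inf. continuous_on UNIV u_inf \<and> S u_inf = u_inf \<and>
           uniform_limit UNIV (\<lambda>m. (S ^^ m) u0) u_inf sequentially"
proof -
  define U where "U = (\<lambda>m. (S ^^ m) u0)"
  have U_Suc: "U (Suc m) = S (U m)" for m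
    by (simp add: U_def)
  have U_cont: "continuous_on UNIV (U m)" for m
    by (induction m) (simp_all add: U_Suc continuous, simp add: U_def u0)
  have "continuous_on UNIV (\<lambda>x. U 1 x - U 0 x)"
    using U_cont by (intro continuous_intros)
  then obtain B where B: "\<forall>x. \<bar>U 1 x - U 0 x\<bar> \<le> B"
    using bounded_continuous_on_compact_UNIV[OF assms(1)] by blast
  define L where "L x = U 0 x + (\<Sum>n. U (Suc n) x - U n x)" for x
  have oscillation: "(U (Suc m) x - U m x) - (U (Suc m) x' - U m x') \<le> q ^ m * (2 * B)" for m x x'
  proof (induction m arbitrary: x x')
    case 0
    then show ?case
      using B[rule_format, of x] B[rule_format, of x'] by simp
  next
    case (Suc m)
    have "(S (U (Suc m)) x - S (U m) x) - (S (U (Suc m)) x' - S (U m) x') \<le> q * (q ^ m * (2 * B))"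
      using Suc.IH by (intro contraction U_cont)
    then show ?case
      unfolding U_Suc[of "Suc m"] U_Suc[of m, symmetric] by (simp only: power_Suc mult.assoc)
  qed
  have "\<bar>U (Suc m) x - U m x\<bar> \<le> q ^ m * (2 * B)" for m x
    unfolding U_Suc by (rule increment[OF U_cont]) (use oscillation[of m] in \<open>simp add: U_Suc\<close>)
  then have limit: "uniform_limit UNIV U L sequentially"
    unfolding L_def by (rule uniform_limit_if_geometric_increments[OF assms(4,5)])
  have L_cont: "continuous_on UNIV L"
    using U_cont by (intro uniform_limit_theorem[OF _ limit]) (auto intro: always_eventually)
  have "S L = L"
    using nonexpansive U_cont L_cont U_Suc limit by (rule fixed_point_if_uniform_limit_of_iterates)
  with L_cont limit show ?thesis
    unfolding U_def by (intro exI[of _ L] conjI)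
qed

locale sinkhorn_setting = fwd: sinkhorn_half_step \<mu> c + bwd: prob_space \<nu>
  for \<mu> :: "'a::topological_space measure" and c :: "'a \<times> 'b::topological_space \<Rightarrow> real"
    and \<nu> :: "'b measure" +
  assumes sets_\<nu>: "sets \<nu> = sets borel"
begin

sublocale bwd: sinkhorn_half_step \<nu> "\<lambda>(y, x). c (x, y)"
proof
  have "(\<lambda>(y, x). c (x, y)) = (\<lambda>p. c (snd p, fst p))"
    by (auto simp: case_prod_beta)
  then show "continuous_on UNIV (\<lambda>(y, x). c (x, y))"
    by (simp only:) (rule continuous_on_compose2[OF fwd.continuous_c], auto intro!: continuous_intros)
qed (fact fwd.compact_X fwd.compact_Y sets_\<nu>)+

lemma sinkhorn_S_eq: "sinkhorn_S c \<mu> \<nu> u = v_of (\<lambda>(y, x). c (x, y)) \<nu> (v_of c \<mu> u)"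
  unfolding sinkhorn_S_def u_of_eq_v_of_swap ..

lemma continuous_on_sinkhorn_S:
  "continuous_on UNIV u \<Longrightarrow> continuous_on UNIV (sinkhorn_S c \<mu> \<nu> u)"
  unfolding sinkhorn_S_eq by (intro bwd.continuous_on_v_of fwd.continuous_on_v_of)

lemma sinkhorn_S_nonexpansive:
  assumes "continuous_on UNIV u" "continuous_on UNIV u'" "\<And>x. \<bar>u x - u' x\<bar> \<le> e"
  shows "\<bar>sinkhorn_S c \<mu> \<nu> u x - sinkhorn_S c \<mu> \<nu> u' x\<bar> \<le> e"
proof -
  have "\<bar>v_of c \<mu> u y - v_of c \<mu> u' y\<bar> \<le> e" for y
    using fwd.v_of_dist_le[OF assms, of y y 0] by simp
  then show ?thesis
    unfolding sinkhorn_S_eq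
    using bwd.v_of_dist_le[OF fwd.continuous_on_v_of[OF assms(1)] fwd.continuous_on_v_of[OF assms(2)],
        of e x x 0]
    by simp
qed

lemma sinkhorn_S_oscillation_contraction:
  assumes "\<And>p. \<bar>c p\<bar> \<le> C"
    and "continuous_on UNIV u" "continuous_on UNIV u'"
    and "\<And>x x'. (u x - u' x) - (u x' - u' x') \<le> r"
  shows "(sinkhorn_S c \<mu> \<nu> u x - sinkhorn_S c \<mu> \<nu> u' x)
           - (sinkhorn_S c \<mu> \<nu> u x' - sinkhorn_S c \<mu> \<nu> u' x')
         \<le> (1 - exp (- 4 * C))\<^sup>2 * r"
proof -
  have "\<bar>(\<lambda>(y, x). c (x, y)) p\<bar> \<le> C" for p
    using assms(1) by (auto split: prod.split)
  moreover have "(v_of c \<mu> u y - v_of c \<mu> u' y) - (v_of c \<mu> u y' - v_of c \<mu> u' y')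
      \<le> (1 - exp (- 4 * C)) * r" for y y'
    by (rule fwd.v_of_oscillation_contraction[OF assms])
  ultimately show ?thesis
    unfolding sinkhorn_S_eq power2_eq_square mult.assoc
    by (intro bwd.v_of_oscillation_contraction fwd.continuous_on_v_of assms(2,3))
qed

lemma integral_exp_sinkhorn_increment:
  assumes u: "continuous_on UNIV u"
  shows "(\<integral>x. exp (sinkhorn_S c \<mu> \<nu> u x - u x) \<partial>\<mu>) = 1"
proof -
  interpret pair_prob_space \<mu> \<nu> ..
  define v where "v = v_of c \<mu> u"
  have v: "continuous_on UNIV v"
    unfolding v_def by (rule fwd.continuous_on_v_of[OF u])
  define f where "f x y = exp (- c (x, y) - v y - u x)" for x y
  have "integrable (\<mu> \<Otimes>\<^sub>M \<nu>) (case_prod f)"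
  proof -
    obtain C Bu Bv where C: "\<forall>p. \<bar>c p\<bar> \<le> C" and Bu: "\<forall>x. \<bar>u x\<bar> \<le> Bu"
      and Bv: "\<forall>y. \<bar>v y\<bar> \<le> Bv"
      using fwd.cost_bounded bounded_continuous_on_compact_UNIV[OF fwd.compact_X u]
        bounded_continuous_on_compact_UNIV[OF fwd.compact_Y v] by blast
    have "\<bar>- c p - v (snd p) - u (fst p)\<bar> \<le> C + Bv + Bu" for p
      using C[rule_format, of p] Bu[rule_format, of "fst p"] Bv[rule_format, of "snd p"] by linarith
    moreover have "c \<in> borel_measurable (\<mu> \<Otimes>\<^sub>M \<nu>)"
      unfolding measurable_cong_sets[OF sets_pair_measure_cong[OF fwd.sets_M sets_\<nu>] refl]
      using compact_Times[OF fwd.compact_X fwd.compact_Y] fwd.continuous_c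
      by (intro borel_measurable_pair_if_continuous_on_compact) simp_all
    moreover have "u \<in> borel_measurable \<mu>" "v \<in> borel_measurable \<nu>"
      using fwd.borel_measurable_continuous[OF u] bwd.borel_measurable_continuous[OF v] .
    ultimately have "integrable (\<mu> \<Otimes>\<^sub>M \<nu>) (\<lambda>p. exp (- c p - v (snd p) - u (fst p)))"
      by (intro integrable_exp_bounded) auto
    moreover have "case_prod f = (\<lambda>p. exp (- c p - v (snd p) - u (fst p)))"
      by (auto simp: f_def fun_eq_iff)
    ultimately show ?thesis
      by simp
  qed
  then have "(\<integral>y. (\<integral>x. f x y \<partial>\<mu>) \<partial>\<nu>) = (\<integral>x. (\<integral>y. f x y \<partial>\<nu>) \<partial>\<mu>)"
    by (rule Fubini_integral)
  moreover have "(\<integral>x. f x y \<partial>\<mu>) = 1" for y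
  proof -
    have "f x y = exp (- v y) * exp (- c (x, y) - u x)" for x
      by (simp add: f_def algebra_simps flip: exp_add)
    then have "(\<integral>x. f x y \<partial>\<mu>) = exp (- v y) * (\<integral>x. exp (- c (x, y) - u x) \<partial>\<mu>)"
      by simp
    also have "\<dots> = exp (- v y) * exp (v y)"
      by (simp add: v_def fwd.exp_v_of[OF u])
    finally show ?thesis
      by (simp flip: exp_add)
  qed
  moreover have "(\<integral>y. f x y \<partial>\<nu>) = exp (sinkhorn_S c \<mu> \<nu> u x - u x)" for x
  proof -
    have "f x y = exp (- u x) * exp (- (\<lambda>(y, x). c (x, y)) (y, x) - v y)" for y
      by (simp add: f_def algebra_simps flip: exp_add)
    then have "(\<integral>y. f x y \<partial>\<nu>) = exp (- u x) * (\<integral>y. exp (- (\<lambda>(y, x). c (x, y)) (y, x) - v y) \<partial>\<nu>)"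
      by simp
    also have "\<dots> = exp (- u x) * exp (sinkhorn_S c \<mu> \<nu> u x)"
      by (simp only: sinkhorn_S_eq v_def bwd.exp_v_of[OF v[unfolded v_def]])
    finally show ?thesis
      by (simp flip: exp_add)
  qed
  ultimately show ?thesis
    by (simp add: bwd.prob_space)
qed

lemma abs_sinkhorn_increment_le_oscillation:
  assumes "continuous_on UNIV u"
    and "\<And>x x'. (sinkhorn_S c \<mu> \<nu> u x - u x) - (sinkhorn_S c \<mu> \<nu> u x' - u x') \<le> r"
  shows "\<bar>sinkhorn_S c \<mu> \<nu> u x - u x\<bar> \<le> r"
proof -
  have increment_cont: "continuous_on UNIV (\<lambda>x. sinkhorn_S c \<mu> \<nu> u x - u x)"
    using assms(1) by (intro continuous_intros continuous_on_sinkhorn_S)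
  then obtain B where B: "\<forall>x. \<bar>sinkhorn_S c \<mu> \<nu> u x - u x\<bar> \<le> B"
    using bounded_continuous_on_compact_UNIV[OF fwd.compact_X] by blast
  show ?thesis
    by (rule fwd.abs_le_oscillation_if_integral_exp_eq_1[OF
          fwd.borel_measurable_continuous[OF increment_cont] B[rule_format]
          integral_exp_sinkhorn_increment[OF assms(1)] assms(2)])
qed

end

theorem theorem2p8:
  fixes \<mu> :: "'a::topological_space measure" and \<nu> :: "'b::topological_space measure"
    and c :: "'a \<times> 'b \<Rightarrow> real" and u0 :: "'a \<Rightarrow> real"
  assumes "compact (UNIV :: 'a set)" and "compact (UNIV :: 'b set)"
    and "prob_space \<mu>" and "sets \<mu> = sets borel"
    and "prob_space \<nu>" and "sets \<nu> = sets borel"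
    and "continuous_on UNIV c"
    and "continuous_on UNIV u0"
  shows "\<exists>u_inf. continuous_on UNIV u_inf \<and> sinkhorn_S c \<mu> \<nu> u_inf = u_inf \<and>
           uniform_limit UNIV (\<lambda>m. (sinkhorn_S c \<mu> \<nu> ^^ m) u0) u_inf sequentially"
proof -
  interpret sinkhorn_setting \<mu> c \<nu>
    using assms by (simp add: sinkhorn_setting_def sinkhorn_setting_axioms_def
        sinkhorn_half_step_def sinkhorn_half_step_axioms_def)
  obtain C where C: "0 \<le> C" "\<forall>p. \<bar>c p\<bar> \<le> C"
    using fwd.cost_bounded by blast
  have q: "0 \<le> (1 - exp (- 4 * C))\<^sup>2" "(1 - exp (- 4 * C))\<^sup>2 < 1"
    using C(1) by (simp_all add: power_less_one_iff abs_less_iff)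
  show ?thesis
    by (rule iterates_converge_to_fixed_point_if_oscillation_contraction[OF assms(1) _ _ q _ _ assms(8)])
      (fact continuous_on_sinkhorn_S sinkhorn_S_nonexpansive abs_sinkhorn_increment_le_oscillation
        sinkhorn_S_oscillation_contraction[OF C(2)[rule_format]])+
qed

end
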